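(* Let $G$ be a graph, let $k\ge1$ be an integer and let $d:=\Delta(G^{\lfloor k/2\rfloor})$. Then $G^k$ is a $\lfloor k/2\rfloor$-shallow minor of $G\circ\overline{K_{d+1}}$.
   Context: Graphs are finite, simple, undirected. For an integer $m\ge0$, $G^m$ has vertex set $V(G)$ with distinct $u,v$ adjacent iff $\mathrm{dist}_G(u,v)\le m$. $\Delta$ is maximum degree. $\overline{K_n}$ is the edgeless graph on $n$ vertices. The lexicographic product $G_1\circ G_2$ has vertex set $V(G_1)\times V(G_2)$, with $(a,v)(b,u)$ an edge iff $ab\in E(G_1)$, or $a=b$ and $uv\in E(G_2)$; thus in $G\circ\overline{K_n}$, $(a,i)(b,j)$ is an edge iff $ab\in E(G)$. $H$ is an $r$-shallow minor of $G'$ if there are pairwise vertex-disjoint connected subgraphs $\mu(v)$ ($v\in V(H)$) of $G'$, each of radius at most $r$, such that for every $vw\in E(H)$ some edge of $G'$ joins $\mu(v)$ and $\mu(w)$. *)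

theory Defs
  imports Main "HOL-Library.Extended_Nat"
begin

type_synonym 'a graph = "'a set \<times> ('a \<Rightarrow> 'a \<Rightarrow> bool)"

definition verts :: "'a graph \<Rightarrow> 'a set" where "verts G = fst G"
definition adj :: "'a graph \<Rightarrow> 'a \<Rightarrow> 'a \<Rightarrow> bool" where "adj G = snd G"

definition is_graph :: "'a graph \<Rightarrow> bool" where
  "is_graph G \<longleftrightarrow> finite (verts G)
     \<and> (\<forall>u v. adj G u v \<longrightarrow> u \<in> verts G \<and> v \<in> verts G)
     \<and> (\<forall>u v. adj G u v \<longrightarrow> adj G v u)
     \<and> (\<forall>u. \<not> adj G u u)"

text \<open>A walk in G from u to v, given as the list of its vertices; its length is length p - 1.\<close>
definition walk :: "'a graph \<Rightarrow> 'a list \<Rightarrow> 'a \<Rightarrow> 'a \<Rightarrow> bool" where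
  "walk G p u v \<longleftrightarrow> p \<noteq> [] \<and> hd p = u \<and> last p = v \<and> set p \<subseteq> verts G
     \<and> (\<forall>i. Suc i < length p \<longrightarrow> adj G (p ! i) (p ! Suc i))"

text \<open>Distance (infinite if no walk exists).\<close>
definition gdist :: "'a graph \<Rightarrow> 'a \<Rightarrow> 'a \<Rightarrow> enat" where
  "gdist G u v = (INF p \<in> {p. walk G p u v}. enat (length p - 1))"

definition gpow :: "'a graph \<Rightarrow> nat \<Rightarrow> 'a graph" where
  "gpow G m = (verts G, \<lambda>u v. u \<in> verts G \<and> v \<in> verts G \<and> u \<noteq> v \<and> gdist G u v \<le> enat m)"

definition degree :: "'a graph \<Rightarrow> 'a \<Rightarrow> nat" where
  "degree G u = card {v \<in> verts G. adj G u v}"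

definition maxdeg :: "'a graph \<Rightarrow> nat" where
  "maxdeg G = (if verts G = {} then 0 else Max (degree G ` verts G))"

text \<open>Lexicographic product G \<circ> (edgeless graph on n vertices), the latter with vertex set {0..<n}.\<close>
definition lex_edgeless :: "'a graph \<Rightarrow> nat \<Rightarrow> ('a \<times> nat) graph" where
  "lex_edgeless G n = (verts G \<times> {0..<n}, \<lambda>(a, i) (b, j). i < n \<and> j < n \<and> adj G a b)"

definition subgraph :: "'a graph \<Rightarrow> 'a graph \<Rightarrow> bool" where
  "subgraph S G \<longleftrightarrow> verts S \<subseteq> verts G
     \<and> (\<forall>u v. adj S u v \<longrightarrow> u \<in> verts S \<and> v \<in> verts S \<and> adj G u v)
     \<and> (\<forall>u v. adj S u v \<longrightarrow> adj S v u)"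

definition connected_graph :: "'a graph \<Rightarrow> bool" where
  "connected_graph G \<longleftrightarrow> verts G \<noteq> {} \<and> (\<forall>u\<in>verts G. \<forall>v\<in>verts G. gdist G u v < \<infinity>)"

definition radius_le :: "'a graph \<Rightarrow> nat \<Rightarrow> bool" where
  "radius_le G r \<longleftrightarrow> (\<exists>c\<in>verts G. \<forall>v\<in>verts G. gdist G c v \<le> enat r)"

definition shallow_minor :: "'a graph \<Rightarrow> nat \<Rightarrow> 'b graph \<Rightarrow> bool" where
  "shallow_minor H r G' \<longleftrightarrow> (\<exists>\<mu> :: 'a \<Rightarrow> 'b graph.
     (\<forall>v\<in>verts H. subgraph (\<mu> v) G' \<and> connected_graph (\<mu> v) \<and> radius_le (\<mu> v) r)
     \<and> (\<forall>v\<in>verts H. \<forall>w\<in>verts H. v \<noteq> w \<longrightarrow> verts (\<mu> v) \<inter> verts (\<mu> w) = {})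
     \<and> (\<forall>v w. adj H v w \<longrightarrow> (\<exists>x\<in>verts (\<mu> v). \<exists>y\<in>verts (\<mu> w). adj G' x y)))"

end

theory Submission
  imports Defs
begin

(* Let r = k div 2 and d = \<Delta>(G^r). Every r-ball B(u) of G has at most d + 1 vertices, so it can be
   labelled injectively by {0..d}. The branch set of v consists of the pairs (u, i) such that v
   is the vertex of B(u) with label i; injectivity of the labellings makes branch sets of distinct
   vertices disjoint. A shortest path from v to a vertex u with v \<in> B(u) stays within distance r
   of v, so lifting it into the branch set of v shows that this branch set is connected of radius
   at most r around (v, label of v in B(v)). Finally, a walk of length at most k \<le> 2r + 1 from v
   to w contains an edge xy with v \<in> B(x) and w \<in> B(y), which joins the branch sets of v and w. *)

lemma verts_pair [simp]: "verts (V, E) = V"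
  by (simp add: verts_def)

lemma adj_pair [simp]: "adj (V, E) = E"
  by (simp add: adj_def)

lemma walk_singleton: "walk G [x] u v \<longleftrightarrow> x = u \<and> x = v \<and> x \<in> verts G"
  by (auto simp: walk_def)

lemma walk_Cons_Cons:
  "walk G (x # y # p) u v \<longleftrightarrow> x = u \<and> x \<in> verts G \<and> adj G x y \<and> walk G (y # p) y v"
proof -
  have "(\<forall>i. Suc i < length (x # y # p) \<longrightarrow> adj G ((x # y # p) ! i) ((x # y # p) ! Suc i))
     \<longleftrightarrow> adj G x y \<and> (\<forall>i. Suc i < length (y # p) \<longrightarrow> adj G ((y # p) ! i) ((y # p) ! Suc i))"
    (is "?A \<longleftrightarrow> ?B")
  proof
    assume ?A
    then show ?B by (metis Suc_less_eq length_Cons nth_Cons_0 nth_Cons_Suc zero_less_Suc)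
  next
    assume ?B
    then show ?A by (metis Suc_less_eq length_Cons nth_Cons_0 nth_Cons_Suc not0_implies_Suc)
  qed
  then show ?thesis
    by (auto simp: walk_def)
qed

lemma walk_imp_verts: "walk G p u v \<Longrightarrow> u \<in> verts G \<and> v \<in> verts G"
  by (auto simp: walk_def)

lemma walk_append: "walk G p u v \<Longrightarrow> walk G q v w \<Longrightarrow> walk G (p @ tl q) u w"
proof (induction p arbitrary: u)
  case Nil
  then show ?case by (simp add: walk_def)
next
  case (Cons x p)
  show ?case
  proof (cases p)
    case Nil
    then show ?thesis
      using Cons.prems by (cases q) (auto simp: walk_def)
  next
    case (Cons y p')
    then show ?thesis
      using Cons.prems Cons.IH[of y] by (auto simp: walk_Cons_Cons)
  qed
qed

lemma walk_rev:
  assumes sym: "\<And>a b. adj G a b \<Longrightarrow> adj G b a"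
  shows "walk G p u v \<Longrightarrow> walk G (rev p) v u"
proof (induction p arbitrary: u)
  case Nil
  then show ?case by (simp add: walk_def)
next
  case (Cons x p)
  show ?case
  proof (cases p)
    case Nil
    then show ?thesis
      using Cons.prems by (auto simp: walk_def)
  next
    case (Cons y p')
    then have rest: "walk G (rev p) v y" and "x = u" "adj G x y" "x \<in> verts G"
      using Cons.prems Cons.IH[of y] by (auto simp: walk_Cons_Cons)
    then have "walk G [y, x] y x"
      using sym walk_imp_verts[OF rest] by (auto simp: walk_Cons_Cons walk_singleton)
    from walk_append[OF rest this] \<open>x = u\<close> show ?thesis
      by simp
  qed
qed

lemma walk_drop: "walk G p u v \<Longrightarrow> j < length p \<Longrightarrow> walk G (drop j p) (p ! j) v"
  unfolding walk_def by (auto simp: hd_drop_conv_nth dest: in_set_dropD)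

lemma walk_take:
  assumes "walk G p u v" "j < length p"
  shows "walk G (take (Suc j) p) u (p ! j)"
proof -
  have "last (take (Suc j) p) = p ! j"
    using assms(2) by (subst last_conv_nth) auto
  moreover have "hd (take (Suc j) p) = hd p"
    using assms(2) by simp
  ultimately
  show ?thesis
    using assms unfolding walk_def by (auto dest: in_set_takeD)
qed

lemma walk_length_ge_2: "walk G p u v \<Longrightarrow> u \<noteq> v \<Longrightarrow> 2 \<le> length p"
  by (cases p rule: remdups_adj.cases) (auto simp: walk_def)

lemma gdist_le_enat_iff: "gdist G u v \<le> enat n \<longleftrightarrow> (\<exists>p. walk G p u v \<and> length p \<le> Suc n)"
proof -
  have "gdist G u v \<le> enat n \<longleftrightarrow> gdist G u v < enat (Suc n)"
    by (metis Suc_ile_eq not_less)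
  also have "\<dots> \<longleftrightarrow> (\<exists>p. walk G p u v \<and> length p - 1 < Suc n)"
    by (simp add: gdist_def INF_less_iff)
  also have "\<dots> \<longleftrightarrow> (\<exists>p. walk G p u v \<and> length p \<le> Suc n)"
    by (auto simp: walk_def)
  finally show ?thesis .
qed

lemma gdist_less_infinity_iff: "gdist G u v < \<infinity> \<longleftrightarrow> (\<exists>p. walk G p u v)"
  unfolding gdist_def INF_less_iff by simp

lemma is_graph_sym: "is_graph G \<Longrightarrow> adj G x y \<Longrightarrow> adj G y x"
  by (simp add: is_graph_def)

lemma verts_gpow [simp]: "verts (gpow G m) = verts G"
  by (simp add: gpow_def)

lemma adj_gpow:
  "adj (gpow G m) u v \<longleftrightarrow> u \<in> verts G \<and> v \<in> verts G \<and> u \<noteq> v \<and> gdist G u v \<le> enat m"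
  by (simp add: gpow_def)

lemma adj_gpow_mono: "adj (gpow G m) u v \<Longrightarrow> m \<le> m' \<Longrightarrow> adj (gpow G m') u v"
  by (auto simp: adj_gpow intro: order.trans)

lemma verts_lex_edgeless [simp]: "verts (lex_edgeless G n) = verts G \<times> {0..<n}"
  by (simp add: lex_edgeless_def)

lemma adj_lex_edgeless:
  "adj (lex_edgeless G n) x y \<longleftrightarrow> snd x < n \<and> snd y < n \<and> adj G (fst x) (fst y)"
  by (cases x, cases y) (simp add: lex_edgeless_def)

lemma walk_lex_edgeless_lift:
  assumes "walk G p u v" "\<And>x. x \<in> set p \<Longrightarrow> l x < n"
  shows "walk (lex_edgeless G n) (map (\<lambda>x. (x, l x)) p) (u, l u) (v, l v)"
  using assms unfolding walk_def by (auto simp: hd_map last_map adj_lex_edgeless)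

definition induced_subgraph :: "'a graph \<Rightarrow> 'a set \<Rightarrow> 'a graph" where
  "induced_subgraph G S = (S, \<lambda>x y. x \<in> S \<and> y \<in> S \<and> adj G x y)"

lemma verts_induced_subgraph [simp]: "verts (induced_subgraph G S) = S"
  by (simp add: induced_subgraph_def)

lemma adj_induced_subgraph: "adj (induced_subgraph G S) x y \<longleftrightarrow> x \<in> S \<and> y \<in> S \<and> adj G x y"
  by (simp add: induced_subgraph_def)

lemma subgraph_induced_subgraph:
  "S \<subseteq> verts G \<Longrightarrow> (\<And>x y. adj G x y \<Longrightarrow> adj G y x) \<Longrightarrow> subgraph (induced_subgraph G S) G"
  by (auto simp: subgraph_def adj_induced_subgraph)

lemma walk_induced_subgraph: "walk G p u v \<Longrightarrow> set p \<subseteq> S \<Longrightarrow> walk (induced_subgraph G S) p u v"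
  by (auto simp: walk_def adj_induced_subgraph subset_iff)

lemma radius_leI:
  assumes "c \<in> verts H" "\<And>x. x \<in> verts H \<Longrightarrow> \<exists>p. walk H p c x \<and> length p \<le> Suc r"
  shows "radius_le H r"
  using assms unfolding radius_le_def gdist_le_enat_iff by blast

lemma connected_graphI:
  assumes "c \<in> verts H" "\<And>x. x \<in> verts H \<Longrightarrow> \<exists>p. walk H p c x"
    and sym: "\<And>x y. adj H x y \<Longrightarrow> adj H y x"
  shows "connected_graph H"
  unfolding connected_graph_def gdist_less_infinity_iff
proof (intro conjI ballI)
  show "verts H \<noteq> {}"
    using assms(1) by blast
  fix x y
  assume "x \<in> verts H" "y \<in> verts H"
  then obtain p q where "walk H p c x" "walk H q c y"
    using assms(2) by blast
  then show "\<exists>p. walk H p x y"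
    using walk_append[OF walk_rev[OF sym]] by blast
qed

lemma shallow_minor_spanning_subgraph:
  assumes "shallow_minor H' r G'" "verts H = verts H'" "\<And>v w. adj H v w \<Longrightarrow> adj H' v w"
  shows "shallow_minor H r G'"
  using assms unfolding shallow_minor_def by metis

definition gball :: "'a graph \<Rightarrow> nat \<Rightarrow> 'a \<Rightarrow> 'a set" where
  "gball G r u = {v \<in> verts G. gdist G u v \<le> enat r}"

lemma mem_gball_iff: "v \<in> gball G r u \<longleftrightarrow> (\<exists>p. walk G p u v \<and> length p \<le> Suc r)"
  by (auto simp: gball_def gdist_le_enat_iff dest: walk_imp_verts)

lemma mem_gball_imp_verts: "v \<in> gball G r u \<Longrightarrow> u \<in> verts G \<and> v \<in> verts G"
  by (auto simp: mem_gball_iff dest: walk_imp_verts)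

lemma card_gball_le:
  assumes "is_graph G"
  shows "card (gball G r u) \<le> maxdeg (gpow G r) + 1"
proof (cases "u \<in> verts G")
  case False
  then have "gball G r u = {}"
    by (auto dest: mem_gball_imp_verts)
  then show ?thesis by simp
next
  case True
  have fin: "finite (verts G)"
    using assms by (simp add: is_graph_def)
  have "gball G r u \<subseteq> insert u {v \<in> verts (gpow G r). adj (gpow G r) u v}"
    using True by (auto simp: gball_def adj_gpow)
  then have "card (gball G r u) \<le> card (insert u {v \<in> verts (gpow G r). adj (gpow G r) u v})"
    using fin by (intro card_mono) auto
  also have "\<dots> \<le> degree (gpow G r) u + 1"
    using fin unfolding degree_def by (simp add: card_insert_le_m1)
  also have "degree (gpow G r) u \<le> maxdeg (gpow G r)"
    using True fin unfolding maxdeg_def by auto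
  finally show ?thesis by simp
qed

definition ball_label :: "'a graph \<Rightarrow> nat \<Rightarrow> 'a \<Rightarrow> 'a \<Rightarrow> nat" where
  "ball_label G r u = (SOME h. bij_betw h (gball G r u) {0..<card (gball G r u)})"

lemma bij_betw_ball_label:
  assumes "is_graph G"
  shows "bij_betw (ball_label G r u) (gball G r u) {0..<card (gball G r u)}"
proof -
  have "finite (gball G r u)"
    using assms by (auto simp: is_graph_def gball_def)
  from ex_bij_betw_finite_nat[OF this] show ?thesis
    unfolding ball_label_def by (rule someI_ex)
qed

lemma ball_label_less:
  assumes "is_graph G" "v \<in> gball G r u"
  shows "ball_label G r u v < maxdeg (gpow G r) + 1"
  using bij_betwE[OF bij_betw_ball_label[OF assms(1)]] assms card_gball_le[OF assms(1), of r u]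
  by fastforce

lemma walk_split_at_edge:
  assumes "walk G p v w" "2 \<le> length p" "length p \<le> 2 * r + 2"
    and sym: "\<And>x y. adj G x y \<Longrightarrow> adj G y x"
  shows "\<exists>x y. adj G x y \<and> v \<in> gball G r x \<and> w \<in> gball G r y"
proof -
  define a where "a = min r (length p - 2)"
  have a: "Suc a < length p"
    using assms(2) by (simp add: a_def)
  have "walk G (rev (take (Suc a) p)) (p ! a) v"
    using walk_rev[OF sym walk_take[OF assms(1)]] a by simp
  moreover have "length (rev (take (Suc a) p)) \<le> Suc r"
    using a by (simp add: a_def)
  ultimately have "v \<in> gball G r (p ! a)"
    by (auto simp: mem_gball_iff)
  moreover have "w \<in> gball G r (p ! Suc a)"
    unfolding mem_gball_iff
    using walk_drop[OF assms(1) a] assms(2,3) by (intro exI[of _ "drop (Suc a) p"]) (simp add: a_def)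
  moreover have "adj G (p ! a) (p ! Suc a)"
    using assms(1) a by (simp add: walk_def)
  ultimately show ?thesis
    by blast
qed

definition branch_set :: "'a graph \<Rightarrow> nat \<Rightarrow> 'a \<Rightarrow> ('a \<times> nat) set" where
  "branch_set G r v = {(u, ball_label G r u v) | u. v \<in> gball G r u}"

definition branch_graph :: "'a graph \<Rightarrow> nat \<Rightarrow> 'a \<Rightarrow> ('a \<times> nat) graph" where
  "branch_graph G r v =
     induced_subgraph (lex_edgeless G (maxdeg (gpow G r) + 1)) (branch_set G r v)"

lemma mem_branch_set_iff:
  "x \<in> branch_set G r v \<longleftrightarrow> v \<in> gball G r (fst x) \<and> snd x = ball_label G r (fst x) v"
  by (cases x) (auto simp: branch_set_def)

lemma branch_set_subset:
  assumes "is_graph G"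
  shows "branch_set G r v \<subseteq> verts (lex_edgeless G (maxdeg (gpow G r) + 1))"
  using ball_label_less[OF assms]
  by (auto simp: mem_branch_set_iff dest: mem_gball_imp_verts)

lemma branch_sets_disjoint:
  assumes "is_graph G" "v \<noteq> w"
  shows "branch_set G r v \<inter> branch_set G r w = {}"
  using bij_betw_imp_inj_on[OF bij_betw_ball_label[OF assms(1)]] assms(2)
  by (auto simp: mem_branch_set_iff inj_on_def)

lemma walk_branch_graph_from_centre:
  assumes "is_graph G" "x \<in> branch_set G r v"
  shows "\<exists>q. walk (branch_graph G r v) q (v, ball_label G r v v) x \<and> length q \<le> Suc r"
proof -
  obtain u where x: "x = (u, ball_label G r u v)" and "v \<in> gball G r u"
    using assms(2) by (auto simp: branch_set_def)
  then obtain p where p: "walk G p u v" "length p \<le> Suc r"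
    by (auto simp: mem_gball_iff)
  have near: "v \<in> gball G r y" if "y \<in> set p" for y
  proof -
    obtain j where "j < length p" "y = p ! j"
      using \<open>y \<in> set p\<close> by (metis in_set_conv_nth)
    then show ?thesis
      using walk_drop[OF p(1)] p(2) unfolding mem_gball_iff
      by (intro exI[of _ "drop j p"]) auto
  qed
  have "walk (lex_edgeless G (maxdeg (gpow G r) + 1)) (map (\<lambda>y. (y, ball_label G r y v)) (rev p))
          (v, ball_label G r v v) x"
    using walk_lex_edgeless_lift[OF walk_rev[OF is_graph_sym[OF assms(1)] p(1)],
        of "\<lambda>y. ball_label G r y v" "maxdeg (gpow G r) + 1"]
      ball_label_less[OF assms(1) near] x
    by simp
  moreover have "set (map (\<lambda>y. (y, ball_label G r y v)) (rev p)) \<subseteq> branch_set G r v"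
    using near by (auto simp: branch_set_def)
  ultimately show ?thesis
    unfolding branch_graph_def using p(2)
    by (intro exI[of _ "map (\<lambda>y. (y, ball_label G r y v)) (rev p)"])
      (simp add: walk_induced_subgraph)
qed

lemma branch_graph_connected_radius_le:
  assumes "is_graph G" "v \<in> verts G"
  shows "connected_graph (branch_graph G r v) \<and> radius_le (branch_graph G r v) r"
proof -
  have "v \<in> gball G r v"
    unfolding mem_gball_iff using assms(2) by (intro exI[of _ "[v]"]) (simp add: walk_singleton)
  then have centre: "(v, ball_label G r v v) \<in> verts (branch_graph G r v)"
    by (auto simp: branch_graph_def branch_set_def)
  have sym: "adj (branch_graph G r v) y x" if "adj (branch_graph G r v) x y" for x y
    using that is_graph_sym[OF assms(1)]
    by (auto simp: branch_graph_def adj_induced_subgraph adj_lex_edgeless)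
  have from_centre: "\<exists>q. walk (branch_graph G r v) q (v, ball_label G r v v) x \<and> length q \<le> Suc r"
    if "x \<in> verts (branch_graph G r v)" for x
    using that walk_branch_graph_from_centre[OF assms(1)] by (simp add: branch_graph_def)
  show ?thesis
    using connected_graphI[OF centre _ sym] radius_leI[OF centre from_centre] from_centre
    by blast
qed

lemma branch_sets_adjacent:
  assumes "is_graph G" "adj (gpow G (2 * r + 1)) v w"
  shows "\<exists>x\<in>branch_set G r v. \<exists>y\<in>branch_set G r w. adj (lex_edgeless G (maxdeg (gpow G r) + 1)) x y"
proof -
  obtain p where "walk G p v w" "length p \<le> 2 * r + 2" "v \<noteq> w"
    using assms(2) by (auto simp: adj_gpow gdist_le_enat_iff)
  then obtain x y where "adj G x y" "v \<in> gball G r x" "w \<in> gball G r y"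
    using walk_split_at_edge[OF _ walk_length_ge_2 _ is_graph_sym[OF assms(1)]] by metis
  then show ?thesis
    using ball_label_less[OF assms(1)]
    by (intro bexI[of _ "(x, ball_label G r x v)"] bexI[of _ "(y, ball_label G r y w)"])
      (auto simp: adj_lex_edgeless branch_set_def)
qed

theorem shallow_minor_gpow_lex_edgeless:
  assumes "is_graph G"
  shows "shallow_minor (gpow G (2 * r + 1)) r (lex_edgeless G (maxdeg (gpow G r) + 1))"
  unfolding shallow_minor_def
proof (intro exI[of _ "branch_graph G r"] conjI ballI impI allI)
  fix v
  assume "v \<in> verts (gpow G (2 * r + 1))"
  then show "connected_graph (branch_graph G r v)" and "radius_le (branch_graph G r v) r"
    using branch_graph_connected_radius_le[OF assms] by simp_all
  show "subgraph (branch_graph G r v) (lex_edgeless G (maxdeg (gpow G r) + 1))"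
    unfolding branch_graph_def using branch_set_subset[OF assms] is_graph_sym[OF assms]
    by (intro subgraph_induced_subgraph) (auto simp: adj_lex_edgeless)
next
  fix v w
  show "v \<noteq> w \<Longrightarrow> verts (branch_graph G r v) \<inter> verts (branch_graph G r w) = {}"
    using branch_sets_disjoint[OF assms] by (simp add: branch_graph_def)
  show "adj (gpow G (2 * r + 1)) v w \<Longrightarrow>
      \<exists>x\<in>verts (branch_graph G r v). \<exists>y\<in>verts (branch_graph G r w).
        adj (lex_edgeless G (maxdeg (gpow G r) + 1)) x y"
    using branch_sets_adjacent[OF assms] by (simp add: branch_graph_def)
qed

theorem lemma26:
  fixes G :: "'a graph" and k :: nat
  assumes "is_graph G" and "k \<ge> 1"
  defines "d \<equiv> maxdeg (gpow G (k div 2))"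
  shows "shallow_minor (gpow G k) (k div 2) (lex_edgeless G (d + 1))"
proof (rule shallow_minor_spanning_subgraph)
  show "shallow_minor (gpow G (2 * (k div 2) + 1)) (k div 2) (lex_edgeless G (d + 1))"
    unfolding d_def using shallow_minor_gpow_lex_edgeless[OF assms(1)] .
  show "adj (gpow G (2 * (k div 2) + 1)) v w" if "adj (gpow G k) v w" for v w
    using adj_gpow_mono[OF that] by simp
qed simp

end
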